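(* Assume each $J_j'$ is a bijection of $\mathbb{R}$, and write $(\nabla J)^{-1}(\alpha):=((J_j')^{-1}(\alpha_j))_{j}$. Define, for $z=(q,\tilde\theta)\in\mathbb{R}^n\times\mathbb{R}^{|\mathcal E|}$ and $\sigma=(\alpha,\lambda,\eta,\nu)\in\mathbb{R}^n\times\mathbb{R}\times\mathbb{R}^{2|\mathcal E|}\times\mathbb{R}^n$, \[ \hat L(z,\sigma)=\sum_{j=1}^n J_j\big((\nabla J)^{-1}(\alpha)_j\big)+\alpha^T\big(q-(\nabla J)^{-1}(\alpha)\big)-\tfrac12\nu^TD\nu+\nu^T(q-d-CB\tilde\theta)-\lambda\mathbf 1^T(q-d)+\eta^T\big(H^T(q-d)-F\big), \] and the closed-loop system \[ T^z\dot z=-\nabla_z\hat L(z,\sigma),\qquad T^\sigma\dot\sigma=\big[\nabla_\sigma\hat L(z,\sigma)\big]^+_\eta, \] where $T^z,T^\sigma$ are diagonal with positive diagonal entries and the projection acts only on the $\eta$-components. Let $(z^*,\sigma^* )$, with $\eta^*\ge0$, be an equilibrium of this system. If a trajectory $(z(t),\sigma(t))$ of the system with $\eta(0)\ge0$ satisfies $\hat L(z^*,\sigma(t))\equiv\hat L(z^*,\sigma^* )$ and $\hat L(z(t),\sigma^* )\equiv\hat L(z^*,\sigma^* )$ for all $t\ge0$, then $\dot z\equiv0$ and $\dot\sigma\equiv0$.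
   Context: $(\mathcal N,\mathcal E)$ is a connected directed graph with $\mathcal N=\{1,\dots,n\}$; $C$ is its incidence matrix ($C_{j,e}=1$ if $e=(j,k)$, $-1$ if $e=(k,j)$, $0$ otherwise). $B$ and $D$ are diagonal with positive diagonal entries. $L:=CBC^T$, $H\in\mathbb{R}^{n\times 2|\mathcal E|}$ with $H^T=\begin{bmatrix} BC^TL^\dagger\\ -BC^TL^\dagger\end{bmatrix}$ ($L^\dagger$ Moore–Penrose inverse), $F=\begin{bmatrix}\overline F\\-\underline F\end{bmatrix}\in\mathbb{R}^{2|\mathcal E|}$, $d\in\mathbb{R}^n$. Each $J_j:\mathbb{R}\to\mathbb{R}$ is strictly convex and twice differentiable. Projection: for vectors $y,u$ of equal length, $([y]^+_u)_j=y_j$ if $y_j>0$ or $u_j>0$, and $0$ otherwise; here applied to the $\eta$-block of the gradient with $u=\eta$. (This system models generators' price-bidding dynamics, market dispatch/pricing dynamics, and linearized swing dynamics with $\omega\equiv\nu$.) *)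

theory Defs
  imports "HOL-Analysis.Analysis"
begin

definition strictly_convex_on :: "real set \<Rightarrow> (real \<Rightarrow> real) \<Rightarrow> bool" where
  "strictly_convex_on S f \<longleftrightarrow>
     (\<forall>x\<in>S. \<forall>y\<in>S. x \<noteq> y \<longrightarrow> (\<forall>u::real. 0 < u \<and> u < 1 \<longrightarrow>
        f ((1 - u) * x + u * y) < (1 - u) * f x + u * f y))"

definition diagm :: "real^'k \<Rightarrow> real^'k^'k" where
  "diagm v = (\<chi> i j. if i = j then v $ i else 0)"

definition pinv :: "real^'k^'k \<Rightarrow> real^'k^'k" where
  "pinv A = (THE X. A ** X ** A = A \<and> X ** A ** X = X \<and>
                    transpose (A ** X) = A ** X \<and> transpose (X ** A) = X ** A)"

definition connected_digraph :: "('e \<Rightarrow> 'n) \<Rightarrow> ('e \<Rightarrow> 'n) \<Rightarrow> bool" where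
  "connected_digraph src tgt \<longleftrightarrow>
     (\<forall>e. src e \<noteq> tgt e) \<and> inj (\<lambda>e. (src e, tgt e)) \<and>
     (\<forall>i j. (i, j) \<in> ({(src e, tgt e) | e. True} \<union> {(tgt e, src e) | e. True})\<^sup>*)"

definition incidence :: "('e::finite \<Rightarrow> 'n::finite) \<Rightarrow> ('e \<Rightarrow> 'n) \<Rightarrow> real^'e^'n" where
  "incidence src tgt = (\<chi> j e. if src e = j then 1 else if tgt e = j then -1 else 0)"

definition laplacian :: "real^'e^'n \<Rightarrow> real^'e \<Rightarrow> real^'n^'n" where
  "laplacian C b = C ** diagm b ** transpose C"

text \<open>The block B C^T L^dagger (so that H^T = [M; -M]).\<close>
definition Mblk :: "real^'e::finite^'n::finite \<Rightarrow> real^'e \<Rightarrow> real^'n^'e" where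
  "Mblk C b = diagm b ** transpose C ** pinv (laplacian C b)"

text \<open>H^T x, an element of R^(2|E|) represented as a pair.\<close>
definition HT :: "real^'e::finite^'n::finite \<Rightarrow> real^'e \<Rightarrow> real^'n \<Rightarrow> (real^'e) \<times> (real^'e)" where
  "HT C b x = (Mblk C b *v x, - (Mblk C b *v x))"

definition gradJinv :: "('n::finite \<Rightarrow> real \<Rightarrow> real) \<Rightarrow> real^'n \<Rightarrow> real^'n" where
  "gradJinv J \<alpha> = (\<chi> j. inv (deriv (J j)) (\<alpha> $ j))"

text \<open>The function hat L(z, sigma), z = (q, theta), sigma = (alpha, lambda, eta, nu),
  eta in R^(2|E|) as pair; F = (Fbar, - Funder).\<close>
definition Lhat ::
  "('n::finite \<Rightarrow> real \<Rightarrow> real) \<Rightarrow> real^'n \<Rightarrow> real^'e::finite^'n \<Rightarrow> real^'e \<Rightarrow> real^'n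
   \<Rightarrow> (real^'e) \<times> (real^'e)
   \<Rightarrow> (real^'n) \<times> (real^'e) \<Rightarrow> (real^'n) \<times> real \<times> ((real^'e) \<times> (real^'e)) \<times> (real^'n) \<Rightarrow> real" where
  "Lhat J Dd C b d F z \<sigma> =
     (case z of (q, \<theta>) \<Rightarrow> case \<sigma> of (\<alpha>, lam, \<eta>, \<nu>) \<Rightarrow>
       (\<Sum>j\<in>UNIV. J j (gradJinv J \<alpha> $ j))
       + \<alpha> \<bullet> (q - gradJinv J \<alpha>)
       - (1/2) * (\<nu> \<bullet> (diagm Dd *v \<nu>))
       + \<nu> \<bullet> (q - d - (C ** diagm b) *v \<theta>)
       - lam * (\<Sum>j\<in>UNIV. (q - d) $ j)
       + \<eta> \<bullet> (HT C b (q - d) - F))"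

definition grad :: "('a::real_inner \<Rightarrow> real) \<Rightarrow> 'a \<Rightarrow> 'a" where
  "grad f x = (THE g. GDERIV f x :> g)"

definition projp :: "real^'k \<Rightarrow> real^'k \<Rightarrow> real^'k" where
  "projp y u = (\<chi> j. if y $ j > 0 \<or> u $ j > 0 then y $ j else 0)"

definition proj_eta ::
  "(real^'n) \<times> real \<times> ((real^'e) \<times> (real^'e)) \<times> (real^'n)
   \<Rightarrow> (real^'e) \<times> (real^'e) \<Rightarrow> (real^'n) \<times> real \<times> ((real^'e) \<times> (real^'e)) \<times> (real^'n)" where
  "proj_eta g \<eta> = (case g of (g\<alpha>, glam, (ga, gb), g\<nu>) \<Rightarrow>
      (g\<alpha>, glam, (projp ga (fst \<eta>), projp gb (snd \<eta>)), g\<nu>))"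

definition eta_of :: "(real^'n) \<times> real \<times> ((real^'e) \<times> (real^'e)) \<times> (real^'n) \<Rightarrow> (real^'e) \<times> (real^'e)" where
  "eta_of \<sigma> = fst (snd (snd \<sigma>))"

definition eta_nonneg :: "(real^'e) \<times> (real^'e) \<Rightarrow> bool" where
  "eta_nonneg \<eta> \<longleftrightarrow> (\<forall>i. fst \<eta> $ i \<ge> 0 \<and> snd \<eta> $ i \<ge> 0)"

text \<open>Diagonal positive time-constant matrices, acting on z- and sigma-vectors.
  T^z is given by its diagonal (tq, ttheta); T^sigma by (talpha, tlambda, teta, tnu).\<close>
definition Tz :: "(real^'n) \<times> (real^'e) \<Rightarrow> (real^'n) \<times> (real^'e) \<Rightarrow> (real^'n) \<times> (real^'e)" where
  "Tz t v = (fst t * fst v, snd t * snd v)"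

definition Tsig ::
  "(real^'n) \<times> real \<times> ((real^'e) \<times> (real^'e)) \<times> (real^'n)
   \<Rightarrow> (real^'n) \<times> real \<times> ((real^'e) \<times> (real^'e)) \<times> (real^'n)
   \<Rightarrow> (real^'n) \<times> real \<times> ((real^'e) \<times> (real^'e)) \<times> (real^'n)" where
  "Tsig t v = (case t of (t1, t2, (t3, t4), t5) \<Rightarrow> case v of (v1, v2, (v3, v4), v5) \<Rightarrow>
      (t1 * v1, t2 * v2, (t3 * v3, t4 * v4), t5 * v5))"

definition Tz_pos :: "(real^'n) \<times> (real^'e) \<Rightarrow> bool" where
  "Tz_pos t \<longleftrightarrow> (\<forall>i. fst t $ i > 0) \<and> (\<forall>i. snd t $ i > 0)"

definition Tsig_pos :: "(real^'n) \<times> real \<times> ((real^'e) \<times> (real^'e)) \<times> (real^'n) \<Rightarrow> bool" where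
  "Tsig_pos t \<longleftrightarrow> (case t of (t1, t2, (t3, t4), t5) \<Rightarrow>
      (\<forall>i. t1 $ i > 0) \<and> t2 > 0 \<and> (\<forall>i. t3 $ i > 0) \<and> (\<forall>i. t4 $ i > 0) \<and> (\<forall>i. t5 $ i > 0))"

end

theory Submission
  imports Defs
begin

text \<open>Along the trajectory \<open>\<eta>\<close> stays nonnegative, because the projected right-hand side is
  nonnegative in every component where \<open>\<eta>\<close> is negative. At the equilibrium primal point \<open>z\<^sup>*\<close>
  the function \<open>Lhat z\<^sup>*\<close> of the dual variables splits into terms that are all maximised at \<open>\<sigma>\<^sup>*\<close> on \<open>\<eta> \<ge> 0\<close>: the \<open>\<alpha>\<close>-terms
  \<open>\<alpha>\<^sub>j q\<^sup>*\<^sub>j - J\<^sub>j\<^sup>*(\<alpha>\<^sub>j)\<close> by the Fenchel-Young inequality (uniquely, by strict convexity of \<open>J\<^sub>j\<close>), the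
  \<open>\<nu>\<close>-terms as concave quadratics, and \<open>\<eta>\<^sup>T(H\<^sup>T(q\<^sup>* - d) - F) \<le> 0\<close> by feasibility and complementary
  slackness, while the \<open>\<lambda>\<close>-term vanishes by power balance. Hence \<open>Lhat z\<^sup>* \<sigma>(t) = Lhat z\<^sup>* \<sigma>\<^sup>*\<close>
  forces \<open>\<alpha>(t) = \<alpha>\<^sup>*\<close>, \<open>\<nu>(t) = \<nu>\<^sup>*\<close> and complementary slackness for \<open>\<eta>(t)\<close>. The \<open>\<alpha>\<close>-equation then
  gives \<open>q(t) = (\<nabla>J)\<^sup>-\<^sup>1(\<alpha>\<^sup>*) = q\<^sup>*\<close>, and the remaining right-hand sides vanish: the \<open>\<lambda>\<close>- and
  \<open>\<eta>\<close>-components by balance and slackness, the \<open>\<theta>\<close>-component since \<open>\<nu>\<^sup>*\<^sup>T C B = 0\<close> at equilibrium.\<close>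

section \<open>Legendre conjugate of a strictly convex function\<close>

lemma strictly_convex_on_imp_convex_on:
  assumes "convex S" "strictly_convex_on S f"
  shows "convex_on S f"
proof (rule convex_onI)
  fix t :: real and x y assume "0 < t" "t < 1" "x \<in> S" "y \<in> S"
  show "f ((1 - t) *\<^sub>R x + t *\<^sub>R y) \<le> (1 - t) * f x + t * f y"
  proof (cases "x = y")
    case False
    then show ?thesis
      using assms(2) \<open>0 < t\<close> \<open>t < 1\<close> \<open>x \<in> S\<close> \<open>y \<in> S\<close>
      unfolding strictly_convex_on_def by (simp add: less_imp_le)
  qed (simp add: algebra_simps)
qed (fact assms(1))

lemma strictly_convex_above_tangent:
  assumes "strictly_convex_on UNIV f" "f differentiable (at x)"
  shows "deriv f x * (y - x) \<le> f y - f x"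
  using assms by (intro convex_on_imp_above_tangent[where A = UNIV])
    (auto simp: strictly_convex_on_imp_convex_on DERIV_deriv_iff_real_differentiable)

lemma strictly_convex_above_tangent_strict:
  assumes "strictly_convex_on UNIV f" "f differentiable (at x)" "x \<noteq> y"
  shows "deriv f x * (y - x) < f y - f x"
proof -
  let ?m = "(x + y) / 2"
  have "\<forall>u. 0 < u \<and> u < 1 \<longrightarrow> f ((1 - u) * x + u * y) < (1 - u) * f x + u * f y"
    using assms(1,3) unfolding strictly_convex_on_def by blast
  from spec[OF this, of "1/2"] have "f ((1 - 1/2) * x + 1/2 * y) < (1 - 1/2) * f x + 1/2 * f y"
    by simp
  then have "f ?m < (f x + f y) / 2"
    by (simp add: field_simps)
  moreover have "deriv f x * (?m - x) \<le> f ?m - f x"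
    using assms(1,2) by (rule strictly_convex_above_tangent)
  ultimately show ?thesis
    by (simp add: field_simps)
qed

text \<open>For the functions of \<open>legendre_function\<close> below this is the convex conjugate
  \<open>sup\<^sub>x (a x - f x)\<close>, the supremum being attained at \<open>x = (f')\<^sup>-\<^sup>1 a\<close>.\<close>
definition legendre_conj :: "(real \<Rightarrow> real) \<Rightarrow> real \<Rightarrow> real" where
  "legendre_conj f a = a * inv (deriv f) a - f (inv (deriv f) a)"

locale legendre_function =
  fixes f :: "real \<Rightarrow> real"
  assumes strictly_convex: "strictly_convex_on UNIV f"
    and differentiable: "f differentiable (at x)"
    and bij_deriv: "bij (deriv f)"
begin

lemma deriv_inv_deriv [simp]: "deriv f (inv (deriv f) a) = a"
  using bij_deriv by (simp add: bij_is_surj surj_f_inv_f)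

lemma fenchel_young: "a * x \<le> f x + legendre_conj f a"
  using strictly_convex_above_tangent[OF strictly_convex differentiable, of "inv (deriv f) a" x]
  by (simp add: legendre_conj_def algebra_simps)

lemma fenchel_young_eq_imp:
  assumes "a * x = f x + legendre_conj f a"
  shows "deriv f x = a"
proof (cases "x = inv (deriv f) a")
  case False
  then show ?thesis
    using strictly_convex_above_tangent_strict[OF strictly_convex differentiable, of "inv (deriv f) a" x] assms
    by (simp add: legendre_conj_def algebra_simps)
qed simp

lemma legendre_conj_dual_le:
  "a * inv (deriv f) c - legendre_conj f a \<le> c * inv (deriv f) c - legendre_conj f c"
  using fenchel_young[of a "inv (deriv f) c"] by (simp add: legendre_conj_def)

lemma legendre_conj_dual_eq_imp:
  assumes "a * inv (deriv f) c - legendre_conj f a = c * inv (deriv f) c - legendre_conj f c"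
  shows "a = c"
  using fenchel_young_eq_imp[of a "inv (deriv f) c"] assms by (simp add: legendre_conj_def)

lemma isCont_inv_deriv:
  assumes "\<And>x. deriv f differentiable (at x)"
  shows "isCont (inv (deriv f)) a"
proof -
  have "isCont (inv (deriv f)) (deriv f (inv (deriv f) a))"
    by (rule isCont_inverse_function[where d = 1])
      (simp_all add: inv_f_f[OF bij_is_inj[OF bij_deriv]] differentiable_imp_continuous_within[OF assms])
  then show ?thesis
    by simp
qed

text \<open>By Fenchel-Young the difference quotient of the conjugate lies between
  \<open>inv (deriv f) a\<close> and \<open>inv (deriv f) y\<close>; continuity of \<open>inv (deriv f)\<close> squeezes it.\<close>
lemma has_real_derivative_legendre_conj:
  assumes "\<And>x. deriv f differentiable (at x)"
  shows "(legendre_conj f has_real_derivative inv (deriv f) a) (at a)"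
proof -
  let ?g = "inv (deriv f)" and ?h = "legendre_conj f"
  have conj_eq: "?h y = y * ?g y - f (?g y)" for y
    by (simp add: legendre_conj_def)
  have lower: "(y - a) * ?g a \<le> ?h y - ?h a" and upper: "?h y - ?h a \<le> (y - a) * ?g y" for y
    using fenchel_young[of y "?g a"] fenchel_young[of a "?g y"] conj_eq[of a] conj_eq[of y]
    by (simp_all add: algebra_simps)
  have quotient: "min (?g y) (?g a) \<le> (?h y - ?h a) / (y - a) \<and> (?h y - ?h a) / (y - a) \<le> max (?g y) (?g a)"
    if "y \<noteq> a" for y
  proof (cases "a < y")
    case True
    then have "?g a \<le> (?h y - ?h a) / (y - a)" "(?h y - ?h a) / (y - a) \<le> ?g y"
      using lower[of y] upper[of y] by (simp_all add: pos_le_divide_eq pos_divide_le_eq mult.commute)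
    then show ?thesis
      by linarith
  next
    case False
    with that have "y < a" by simp
    then have "?g y \<le> (?h y - ?h a) / (y - a)" "(?h y - ?h a) / (y - a) \<le> ?g a"
      using lower[of y] upper[of y] by (simp_all add: neg_le_divide_eq neg_divide_le_eq mult.commute)
    then show ?thesis
      by linarith
  qed
  have "(?g \<longlongrightarrow> ?g a) (at a)"
    using isCont_inv_deriv[OF assms] by (simp add: isCont_def)
  then have "((\<lambda>y. min (?g y) (?g a)) \<longlongrightarrow> ?g a) (at a)" "((\<lambda>y. max (?g y) (?g a)) \<longlongrightarrow> ?g a) (at a)"
    by (auto intro: tendsto_min[THEN tendsto_eq_rhs] tendsto_max[THEN tendsto_eq_rhs])
  then have "((\<lambda>y. (?h y - ?h a) / (y - a)) \<longlongrightarrow> ?g a) (at a)"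
    by (rule tendsto_sandwich[rotated 2])
      (use quotient in \<open>auto simp: eventually_at_filter\<close>)
  then show ?thesis
    by (simp add: has_field_derivative_iff)
qed

end

section \<open>Gradients of \<open>Lhat\<close>\<close>

lemma grad_eqI:
  assumes "GDERIV f x :> g"
  shows "grad f x = g"
  unfolding grad_def
proof (rule the_equality)
  fix g' assume "GDERIV f x :> g'"
  then have "(\<lambda>h. h \<bullet> g') = (\<lambda>h. h \<bullet> g)"
    using assms unfolding gderiv_def by (rule has_derivative_unique)
  then have "(g' - g) \<bullet> g' = (g' - g) \<bullet> g"
    by metis
  then have "(g' - g) \<bullet> (g' - g) = 0"
    by (simp add: inner_diff_right)
  then show "g' = g"
    by simp
qed (fact assms)

lemma GDERIV_fst:
  assumes "GDERIV f x :> f'"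
  shows "GDERIV (\<lambda>p. f (fst p)) (x, y) :> (f', 0)"
proof -
  have "((\<lambda>p. f (fst p)) has_derivative (\<lambda>h. fst h \<bullet> f')) (at (x, y))"
    using has_derivative_compose[OF has_derivative_fst[OF has_derivative_ident]] assms
    unfolding gderiv_def by fastforce
  then show ?thesis
    by (simp add: gderiv_def inner_prod_def)
qed

lemma GDERIV_snd:
  assumes "GDERIV f y :> f'"
  shows "GDERIV (\<lambda>p. f (snd p)) (x, y) :> (0, f')"
proof -
  have "((\<lambda>p. f (snd p)) has_derivative (\<lambda>h. snd h \<bullet> f')) (at (x, y))"
    using has_derivative_compose[OF has_derivative_snd[OF has_derivative_ident]] assms
    unfolding gderiv_def by fastforce
  then show ?thesis
    by (simp add: gderiv_def inner_prod_def)
qed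

lemma GDERIV_inner_const: "GDERIV (\<lambda>x. x \<bullet> w) x :> w"
  unfolding gderiv_def by (auto intro!: derivative_eq_intros)

lemma GDERIV_sum_vec_nth:
  fixes x :: "real^'k::finite"
  assumes "\<And>j. (\<phi> j has_real_derivative D j) (at (x $ j))"
  shows "GDERIV (\<lambda>x. \<Sum>j\<in>UNIV. \<phi> j (x $ j)) x :> (\<chi> j. D j)"
proof -
  have "((\<lambda>x. \<phi> j (x $ j)) has_derivative (\<lambda>h. D j * h $ j)) (at x)" for j
    using has_derivative_compose[OF bounded_linear_imp_has_derivative[OF bounded_linear_vec_nth]] assms[of j]
    by (fastforce simp: has_field_derivative_def)
  then have "((\<lambda>x. \<Sum>j\<in>UNIV. \<phi> j (x $ j)) has_derivative (\<lambda>h. \<Sum>j\<in>UNIV. D j * h $ j)) (at x)"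
    by (rule has_derivative_sum)
  then show ?thesis
    by (simp add: gderiv_def inner_vec_def mult.commute)
qed

lemma diagm_mult_vec: "diagm v *v x = v * x"
proof -
  have "(\<Sum>j\<in>UNIV. (if i = j then v $ i else 0) * x $ j) = v $ i * x $ i" for i
    by (simp add: if_distrib[of "\<lambda>c. c * _"] cong: if_cong)
  then show ?thesis
    by (simp add: vec_eq_iff matrix_vector_mult_def diagm_def)
qed

lemma Lhat_dual_split:
  "Lhat J Dd C b d F (q, \<theta>) (\<alpha>, lam, \<eta>, \<nu>) =
     (\<Sum>j\<in>UNIV. \<alpha> $ j * q $ j - legendre_conj (J j) (\<alpha> $ j))
     + (- lam * (\<Sum>j\<in>UNIV. (q - d) $ j)
     + (\<eta> \<bullet> (HT C b (q - d) - F)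
     + (\<Sum>j\<in>UNIV. \<nu> $ j * (q - d - (C ** diagm b) *v \<theta>) $ j - Dd $ j * (\<nu> $ j)\<^sup>2 / 2)))"
  by (simp add: Lhat_def gradJinv_def legendre_conj_def diagm_mult_vec inner_vec_def sum.distrib
      sum_subtractf sum_negf sum_distrib_left sum_divide_distrib algebra_simps power2_eq_square)

lemma grad_dual_Lhat:
  assumes "\<And>j a. (legendre_conj (J j) has_real_derivative inv (deriv (J j)) a) (at a)"
  shows "grad (\<lambda>\<sigma>. Lhat J Dd C b d F (q, \<theta>) \<sigma>) (\<alpha>, lam, \<eta>, \<nu>) =
    (q - gradJinv J \<alpha>, - (\<Sum>j\<in>UNIV. (q - d) $ j), HT C b (q - d) - F,
     q - d - (C ** diagm b) *v \<theta> - Dd * \<nu>)"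
proof (rule grad_eqI)
  define c where "c = q - d - (C ** diagm b) *v \<theta>"
  define A where "A \<alpha>' = (\<Sum>j\<in>UNIV. \<alpha>' $ j * q $ j - legendre_conj (J j) (\<alpha>' $ j))" for \<alpha>'
  define B where "B l = - l * (\<Sum>j\<in>UNIV. (q - d) $ j)" for l
  define E where "E \<eta>' = \<eta>' \<bullet> (HT C b (q - d) - F)" for \<eta>'
  define N where "N \<nu>' = (\<Sum>j\<in>UNIV. \<nu>' $ j * c $ j - Dd $ j * (\<nu>' $ j)\<^sup>2 / 2)" for \<nu>'
  have split: "Lhat J Dd C b d F (q, \<theta>) \<sigma> =
      A (fst \<sigma>) + (B (fst (snd \<sigma>)) + (E (fst (snd (snd \<sigma>))) + N (snd (snd (snd \<sigma>)))))" for \<sigma>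
    by (cases \<sigma>) (simp add: Lhat_dual_split A_def B_def E_def N_def c_def)
  have "GDERIV A \<alpha> :> (\<chi> j. q $ j - inv (deriv (J j)) (\<alpha> $ j))"
    unfolding A_def by (intro GDERIV_sum_vec_nth derivative_eq_intros) (auto intro: assms)
  moreover have "GDERIV B lam :> - (\<Sum>j\<in>UNIV. (q - d) $ j)"
    unfolding B_def by (auto intro!: derivative_eq_intros)
  moreover have "GDERIV E \<eta> :> HT C b (q - d) - F"
    unfolding E_def by (rule GDERIV_inner_const)
  moreover have "GDERIV N \<nu> :> (\<chi> j. c $ j - Dd $ j * \<nu> $ j)"
    unfolding N_def by (intro GDERIV_sum_vec_nth) (auto intro!: derivative_eq_intros)
  ultimately have "GDERIV (\<lambda>\<sigma>. Lhat J Dd C b d F (q, \<theta>) \<sigma>) (\<alpha>, lam, \<eta>, \<nu>)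
      :> ((\<chi> j. q $ j - inv (deriv (J j)) (\<alpha> $ j)), 0) + ((0, - (\<Sum>j\<in>UNIV. (q - d) $ j), 0)
         + ((0, 0, HT C b (q - d) - F, 0) + (0, 0, 0, (\<chi> j. c $ j - Dd $ j * \<nu> $ j))))"
    unfolding split by (intro GDERIV_add GDERIV_fst GDERIV_snd)
  then show "GDERIV (\<lambda>\<sigma>. Lhat J Dd C b d F (q, \<theta>) \<sigma>) (\<alpha>, lam, \<eta>, \<nu>) :>
      (q - gradJinv J \<alpha>, - (\<Sum>j\<in>UNIV. (q - d) $ j), HT C b (q - d) - F, c - Dd * \<nu>)"
    by (rule GDERIV_subst) (simp add: gradJinv_def vec_eq_iff)
qed

lemma Lhat_primal_affine:
  "Lhat J Dd C b d F (q, \<theta>) (\<alpha>, lam, \<eta>, \<nu>) = Lhat J Dd C b d F (0, 0) (\<alpha>, lam, \<eta>, \<nu>)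
     + (q, \<theta>) \<bullet> (\<alpha> + \<nu> - (\<chi> j. lam) + (fst \<eta> - snd \<eta>) v* Mblk C b, - (\<nu> v* (C ** diagm b)))"
proof -
  have "lam * (\<Sum>j\<in>UNIV. q $ j) = q \<bullet> (\<chi> j. lam)"
    by (simp add: inner_vec_def sum_distrib_left mult.commute)
  moreover have "(x - y) v* A = x v* A - y v* A" for x y :: "real^'e" and A :: "real^'n^'e"
    by (simp add: vec_eq_iff vector_matrix_mult_def sum_subtractf algebra_simps)
  ultimately show ?thesis
    by (cases \<eta>, cases F)
      (simp add: Lhat_def HT_def dot_lmul_matrix[symmetric] sum_subtractf algebra_simps inner_commute)
qed

lemma grad_primal_Lhat:
  "grad (\<lambda>z. Lhat J Dd C b d F z (\<alpha>, lam, \<eta>, \<nu>)) z =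
     (\<alpha> + \<nu> - (\<chi> j. lam) + (fst \<eta> - snd \<eta>) v* Mblk C b, - (\<nu> v* (C ** diagm b)))"
proof (rule grad_eqI)
  have "(\<lambda>z. Lhat J Dd C b d F z (\<alpha>, lam, \<eta>, \<nu>)) = (\<lambda>z. Lhat J Dd C b d F (0, 0) (\<alpha>, lam, \<eta>, \<nu>)
      + z \<bullet> (\<alpha> + \<nu> - (\<chi> j. lam) + (fst \<eta> - snd \<eta>) v* Mblk C b, - (\<nu> v* (C ** diagm b))))"
    by (rule ext) (metis Lhat_primal_affine surj_pair)
  then show "GDERIV (\<lambda>z. Lhat J Dd C b d F z (\<alpha>, lam, \<eta>, \<nu>)) z :>
      (\<alpha> + \<nu> - (\<chi> j. lam) + (fst \<eta> - snd \<eta>) v* Mblk C b, - (\<nu> v* (C ** diagm b)))"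
    by (simp add: GDERIV_add[OF GDERIV_const GDERIV_inner_const, simplified])
qed

section \<open>Sign constraints and projected dynamics\<close>

lemma inner_nonneg_nonpos:
  fixes x y :: "'a::ordered_euclidean_space"
  assumes "0 \<le> x" "y \<le> 0"
  shows "x \<bullet> y \<le> 0"
proof -
  have "(x \<bullet> i) * (y \<bullet> i) \<le> 0" if "i \<in> Basis" for i
  proof -
    have "0 \<le> x \<bullet> i" "y \<bullet> i \<le> 0"
      using assms eucl_le[of 0 x] eucl_le[of y 0] that by auto
    then show ?thesis
      by (rule mult_nonneg_nonpos)
  qed
  then show ?thesis
    unfolding euclidean_inner[of x y] by (rule sum_nonpos)
qed

lemma projp_eq_0_iff:
  fixes y u :: "real^'k::finite"
  assumes "0 \<le> u"
  shows "projp y u = 0 \<longleftrightarrow> y \<le> 0 \<and> u \<bullet> y = 0"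
proof -
  have u: "0 \<le> u $ i" for i
    using assms by (simp add: less_eq_vec_def)
  have "projp y u $ i = 0 \<longleftrightarrow> y $ i \<le> 0 \<and> u $ i * y $ i = 0" for i
    using u[of i] by (auto simp: projp_def)
  then have "projp y u = 0 \<longleftrightarrow> (\<forall>i. y $ i \<le> 0 \<and> u $ i * y $ i = 0)"
    by (simp add: vec_eq_iff)
  also have "\<dots> \<longleftrightarrow> y \<le> 0 \<and> u \<bullet> y = 0"
  proof (cases "y \<le> 0")
    case True
    then have "\<forall>i\<in>UNIV. 0 \<le> - (u $ i * y $ i)"
      using u by (simp add: less_eq_vec_def mult_nonneg_nonpos)
    then have "(\<Sum>i\<in>UNIV. - (u $ i * y $ i)) = 0 \<longleftrightarrow> (\<forall>i. - (u $ i * y $ i) = 0)"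
      by (simp add: sum_nonneg_eq_0_iff)
    with True show ?thesis
      by (simp add: inner_vec_def sum_negf less_eq_vec_def)
  qed (auto simp: less_eq_vec_def)
  finally show ?thesis .
qed

lemma projp_pair_eq_0_iff:
  fixes w \<eta> :: "(real^'k::finite) \<times> (real^'k)"
  assumes "0 \<le> \<eta>"
  shows "projp (fst w) (fst \<eta>) = 0 \<and> projp (snd w) (snd \<eta>) = 0 \<longleftrightarrow> w \<le> 0 \<and> \<eta> \<bullet> w = 0"
proof -
  have \<eta>: "0 \<le> fst \<eta>" "0 \<le> snd \<eta>"
    using assms by (simp_all add: less_eq_prod_def)
  have "projp (fst w) (fst \<eta>) = 0 \<and> projp (snd w) (snd \<eta>) = 0 \<longleftrightarrow>
      (fst w \<le> 0 \<and> fst \<eta> \<bullet> fst w = 0) \<and> (snd w \<le> 0 \<and> snd \<eta> \<bullet> snd w = 0)"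
    using projp_eq_0_iff[OF \<eta>(1)] projp_eq_0_iff[OF \<eta>(2)] by simp
  also have "\<dots> \<longleftrightarrow> w \<le> 0 \<and> \<eta> \<bullet> w = 0"
  proof (cases "w \<le> 0")
    case True
    then have "fst \<eta> \<bullet> fst w \<le> 0" "snd \<eta> \<bullet> snd w \<le> 0"
      using \<eta> by (simp_all add: less_eq_prod_def inner_nonneg_nonpos)
    with True show ?thesis
      by (auto simp: less_eq_prod_def inner_prod_def)
  qed (auto simp: less_eq_prod_def)
  finally show ?thesis .
qed

lemma constant_on_Ici_imp_derivative_0:
  fixes f :: "real \<Rightarrow> 'a::real_normed_vector"
  assumes "(f has_vector_derivative f') (at t within {0..})" "0 \<le> t"
    and "\<And>u. 0 \<le> u \<Longrightarrow> f u = c"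
  shows "f' = 0"
proof -
  have "(f has_vector_derivative f') (at t within {t..})"
    using has_vector_derivative_within_subset[OF assms(1)] assms(2) by auto
  then have "((\<lambda>_. c) has_vector_derivative f') (at t within {t..})"
    by (rule has_vector_derivative_transform[rotated 2]) (use assms(2,3) in auto)
  moreover have "((\<lambda>_. c) has_vector_derivative 0) (at t within {t..})"
    by (rule has_vector_derivative_const)
  moreover have "at t within {t..} \<noteq> bot"
    by (simp add: at_within_Ici_at_right)
  ultimately show ?thesis
    by (metis vector_derivative_unique_within)
qed

text \<open>If \<open>e\<close> became negative at \<open>t\<^sub>1\<close>, it would be negative on \<open>]t\<^sub>0, t\<^sub>1[\<close> for the last time
  \<open>t\<^sub>0 \<le> t\<^sub>1\<close> with \<open>e t\<^sub>0 \<ge> 0\<close>, hence nondecreasing there, which contradicts \<open>e t\<^sub>0 \<ge> 0 > e t\<^sub>1\<close>.\<close>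
lemma nonneg_invariant:
  fixes e e' :: "real \<Rightarrow> real"
  assumes deriv: "\<And>t. 0 \<le> t \<Longrightarrow> (e has_real_derivative e' t) (at t within {0..})"
    and initial: "0 \<le> e 0" and inward: "\<And>t. 0 \<le> t \<Longrightarrow> e t < 0 \<Longrightarrow> 0 \<le> e' t"
    and "0 \<le> t\<^sub>1"
  shows "0 \<le> e t\<^sub>1"
proof (rule ccontr)
  assume "\<not> 0 \<le> e t\<^sub>1"
  then have neg1: "e t\<^sub>1 < 0" by simp
  have cont: "continuous_on {0..} e"
    using deriv by (auto simp: continuous_on_eq_continuous_within has_real_derivative_iff_has_vector_derivative
        intro: has_vector_derivative_continuous)
  let ?S = "{x \<in> {0..t\<^sub>1}. (\<lambda>_. 0) x \<le> e x}"
  have closed: "closed ?S"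
    by (rule continuous_on_closed_Collect_le) (use cont in \<open>auto intro: continuous_on_subset\<close>)
  have bdd: "bdd_above ?S"
    by (rule bdd_aboveI[of _ t\<^sub>1]) auto
  define t\<^sub>0 where "t\<^sub>0 = Sup ?S"
  have "t\<^sub>0 \<in> ?S"
    unfolding t\<^sub>0_def using initial \<open>0 \<le> t\<^sub>1\<close> by (intro closed_contains_Sup[OF _ bdd closed]) auto
  then have t\<^sub>0: "0 \<le> t\<^sub>0" "t\<^sub>0 \<le> t\<^sub>1" "0 \<le> e t\<^sub>0"
    by auto
  have "e t\<^sub>0 \<le> e t\<^sub>1"
  proof (rule DERIV_nonneg_imp_increasing_open[OF t\<^sub>0(2)])
    fix x assume x: "t\<^sub>0 < x" "x < t\<^sub>1"
    have "e x < 0"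
    proof (rule ccontr)
      assume "\<not> e x < 0"
      with x t\<^sub>0 have "x \<in> ?S" by auto
      then have "x \<le> t\<^sub>0"
        unfolding t\<^sub>0_def by (rule cSup_upper[OF _ bdd])
      with x show False by simp
    qed
    moreover have "at x within {0..} = at x"
      using x t\<^sub>0 by (intro at_within_interior) (auto simp: interior_Ici[of "-1"])
    ultimately show "\<exists>y. (e has_real_derivative y) (at x) \<and> 0 \<le> y"
      using deriv[of x] inward[of x] x t\<^sub>0 by auto
  next
    show "continuous_on {t\<^sub>0..t\<^sub>1} e"
      using cont t\<^sub>0 by (auto intro: continuous_on_subset)
  qed
  with neg1 t\<^sub>0 show False by simp
qed

lemma projected_flow_nonneg:
  fixes u u' y :: "real \<Rightarrow> real^'k::finite" and T :: "real^'k"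
  assumes deriv: "\<And>t. 0 \<le> t \<Longrightarrow> (u has_vector_derivative u' t) (at t within {0..})"
    and T_pos: "\<And>i. 0 < T $ i"
    and flow: "\<And>t. 0 \<le> t \<Longrightarrow> T * u' t = projp (y t) (u t)"
    and "0 \<le> u 0" "0 \<le> t"
  shows "0 \<le> u t"
proof -
  have "0 \<le> u t $ i" for i
  proof (rule nonneg_invariant[of "\<lambda>t. u t $ i" "\<lambda>t. u' t $ i" t])
    show "((\<lambda>t. u t $ i) has_real_derivative u' t $ i) (at t within {0..})" if "0 \<le> t" for t
      using bounded_linear.has_vector_derivative[OF bounded_linear_vec_nth deriv[OF that]]
      by (simp add: has_real_derivative_iff_has_vector_derivative)
    show "0 \<le> u' t $ i" if "0 \<le> t" "u t $ i < 0" for t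
    proof -
      have "T $ i * u' t $ i = projp (y t) (u t) $ i"
        using flow[OF that(1)] by (metis vector_mult_component)
      also have "\<dots> \<ge> 0"
        using that(2) by (simp add: projp_def)
      finally show ?thesis
        using T_pos[of i] by (simp add: zero_le_mult_iff)
    qed
  qed (use \<open>0 \<le> u 0\<close> \<open>0 \<le> t\<close> in \<open>auto simp: less_eq_vec_def\<close>)
  then show ?thesis
    by (simp add: less_eq_vec_def)
qed

section \<open>The trajectory argument\<close>

lemma concave_quadratic_le:
  fixes D v v\<^sub>0 :: real
  assumes "0 < D"
  shows "v * (D * v\<^sub>0) - D * v\<^sup>2 / 2 \<le> v\<^sub>0 * (D * v\<^sub>0) - D * v\<^sub>0\<^sup>2 / 2"
    and "v * (D * v\<^sub>0) - D * v\<^sup>2 / 2 = v\<^sub>0 * (D * v\<^sub>0) - D * v\<^sub>0\<^sup>2 / 2 \<longleftrightarrow> v = v\<^sub>0"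
proof -
  have gap: "v\<^sub>0 * (D * v\<^sub>0) - D * v\<^sub>0\<^sup>2 / 2 - (v * (D * v\<^sub>0) - D * v\<^sup>2 / 2) = D / 2 * (v - v\<^sub>0)\<^sup>2"
    by (simp add: power2_eq_square algebra_simps)
  show "v * (D * v\<^sub>0) - D * v\<^sup>2 / 2 \<le> v\<^sub>0 * (D * v\<^sub>0) - D * v\<^sub>0\<^sup>2 / 2"
    using gap assms by (smt (verit) divide_nonneg_pos mult_nonneg_nonneg zero_le_power2)
  show "v * (D * v\<^sub>0) - D * v\<^sup>2 / 2 = v\<^sub>0 * (D * v\<^sub>0) - D * v\<^sub>0\<^sup>2 / 2 \<longleftrightarrow> v = v\<^sub>0"
  proof
    assume "v * (D * v\<^sub>0) - D * v\<^sup>2 / 2 = v\<^sub>0 * (D * v\<^sub>0) - D * v\<^sub>0\<^sup>2 / 2"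
    with gap have "D / 2 * (v - v\<^sub>0)\<^sup>2 = 0"
      by simp
    with assms show "v = v\<^sub>0"
      by simp
  qed simp
qed

lemma Lhat_eq_equilibrium_value_imp:
  fixes J :: "'n::finite \<Rightarrow> real \<Rightarrow> real"
  assumes legendre: "\<And>j. legendre_function (J j)"
    and D_pos: "\<And>j. 0 < Dd $ j"
    and q_eq: "q = gradJinv J \<alpha>\<^sub>0"
    and balance: "(\<Sum>j\<in>UNIV. (q - d) $ j) = 0"
    and flow_nonpos: "HT C b (q - d) - F \<le> 0"
    and slackness: "\<eta>\<^sub>0 \<bullet> (HT C b (q - d) - F) = 0"
    and \<nu>_eq: "q - d - (C ** diagm b) *v \<theta> = Dd * \<nu>\<^sub>0"
    and \<eta>_nonneg: "0 \<le> \<eta>"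
    and eq: "Lhat J Dd C b d F (q, \<theta>) (\<alpha>, lam, \<eta>, \<nu>) = Lhat J Dd C b d F (q, \<theta>) (\<alpha>\<^sub>0, lam\<^sub>0, \<eta>\<^sub>0, \<nu>\<^sub>0)"
  shows "\<alpha> = \<alpha>\<^sub>0 \<and> \<nu> = \<nu>\<^sub>0 \<and> \<eta> \<bullet> (HT C b (q - d) - F) = 0"
proof -
  define a where "a j x = x * q $ j - legendre_conj (J j) x" for j x
  define n where "n j v = v * (Dd $ j * \<nu>\<^sub>0 $ j) - Dd $ j * v\<^sup>2 / 2" for j v
  have q_nth: "q $ j = inv (deriv (J j)) (\<alpha>\<^sub>0 $ j)" for j
    using q_eq by (simp add: gradJinv_def)
  have a_le: "a j x \<le> a j (\<alpha>\<^sub>0 $ j)" for j x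
    unfolding a_def q_nth by (rule legendre_function.legendre_conj_dual_le[OF legendre])
  have n_le: "n j v \<le> n j (\<nu>\<^sub>0 $ j)" for j v
    unfolding n_def using D_pos by (rule concave_quadratic_le)
  have split: "Lhat J Dd C b d F (q, \<theta>) (\<alpha>', lam', \<eta>', \<nu>') =
      (\<Sum>j\<in>UNIV. a j (\<alpha>' $ j)) + (\<eta>' \<bullet> (HT C b (q - d) - F) + (\<Sum>j\<in>UNIV. n j (\<nu>' $ j)))"
    for \<alpha>' lam' \<eta>' \<nu>'
    using \<nu>_eq balance by (simp add: Lhat_dual_split a_def n_def vec_eq_iff)
  have "\<eta> \<bullet> (HT C b (q - d) - F) \<le> 0"
    using \<eta>_nonneg flow_nonpos by (rule inner_nonneg_nonpos)
  moreover have "(\<Sum>j\<in>UNIV. a j (\<alpha> $ j)) \<le> (\<Sum>j\<in>UNIV. a j (\<alpha>\<^sub>0 $ j))"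
    by (intro sum_mono a_le)
  moreover have "(\<Sum>j\<in>UNIV. n j (\<nu> $ j)) \<le> (\<Sum>j\<in>UNIV. n j (\<nu>\<^sub>0 $ j))"
    by (intro sum_mono n_le)
  ultimately have sum_a: "(\<Sum>j\<in>UNIV. a j (\<alpha> $ j)) = (\<Sum>j\<in>UNIV. a j (\<alpha>\<^sub>0 $ j))"
    and sum_n: "(\<Sum>j\<in>UNIV. n j (\<nu> $ j)) = (\<Sum>j\<in>UNIV. n j (\<nu>\<^sub>0 $ j))"
    and "\<eta> \<bullet> (HT C b (q - d) - F) = 0"
    using eq slackness unfolding split by linarith+
  moreover have "\<alpha> $ j = \<alpha>\<^sub>0 $ j" for j
    using sum_mono_inv[OF sum_a a_le] unfolding a_def q_nth
    by (auto intro: legendre_function.legendre_conj_dual_eq_imp[OF legendre])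
  moreover have "\<nu> $ j = \<nu>\<^sub>0 $ j" for j
    using sum_mono_inv[OF sum_n n_le] concave_quadratic_le(2)[OF D_pos] unfolding n_def by auto
  ultimately show ?thesis
    by (simp add: vec_eq_iff)
qed

lemma proj_eta_eq:
  "proj_eta (a, l, w, v) \<eta> = (a, l, (projp (fst w) (fst \<eta>), projp (snd w) (snd \<eta>)), v)"
  by (cases w) (simp add: proj_eta_def)

lemma Tsig_eq:
  "Tsig (t\<^sub>1, t\<^sub>2, (t\<^sub>3, t\<^sub>4), t\<^sub>5) v =
     (t\<^sub>1 * fst v, t\<^sub>2 * fst (snd v), (t\<^sub>3 * fst (eta_of v), t\<^sub>4 * snd (eta_of v)), t\<^sub>5 * snd (snd (snd v)))"
  by (cases v) (auto simp: Tsig_def eta_of_def split: prod.splits)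

lemma times_vec_eq_0_iff:
  fixes T v :: "'a::{semiring_no_zero_divisors}^'k"
  assumes "\<And>i. T $ i \<noteq> 0"
  shows "T * v = 0 \<longleftrightarrow> v = 0"
  using assms by (simp add: vec_eq_iff)

lemma bounded_linear_eta_of: "bounded_linear eta_of"
  unfolding eta_of_def
  by (intro bounded_linear_compose[OF bounded_linear_fst] bounded_linear_compose[OF bounded_linear_snd]
      bounded_linear_snd)

locale dual_trajectory =
  fixes J :: "'n::finite \<Rightarrow> real \<Rightarrow> real" and Dd d :: "real^'n"
    and C :: "real^'e::finite^'n" and b :: "real^'e" and F :: "(real^'e) \<times> (real^'e)"
    and tq :: "real^'n" and t\<theta> :: "real^'e"
    and t\<alpha> :: "real^'n" and tlam :: real and t\<eta>\<^sub>1 t\<eta>\<^sub>2 :: "real^'e" and t\<nu> :: "real^'n"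
    and q\<^sub>0 :: "real^'n" and \<theta>\<^sub>0 :: "real^'e"
    and \<alpha>\<^sub>0 :: "real^'n" and lam\<^sub>0 :: real and \<eta>\<^sub>0 :: "(real^'e) \<times> (real^'e)" and \<nu>\<^sub>0 :: "real^'n"
    and z z' :: "real \<Rightarrow> (real^'n) \<times> (real^'e)"
    and s s' :: "real \<Rightarrow> (real^'n) \<times> real \<times> ((real^'e) \<times> (real^'e)) \<times> (real^'n)"
  assumes legendre: "\<And>j. legendre_function (J j)"
    and deriv_differentiable: "\<And>j x. deriv (J j) differentiable (at x)"
    and D_pos: "\<And>j. 0 < Dd $ j"
    and T_pos: "\<And>i. 0 < t\<theta> $ i" "0 < tlam" "\<And>i. 0 < t\<eta>\<^sub>1 $ i" "\<And>i. 0 < t\<eta>\<^sub>2 $ i"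
    and eq_eta: "0 \<le> \<eta>\<^sub>0"
    and eq_z: "grad (\<lambda>x. Lhat J Dd C b d F x (\<alpha>\<^sub>0, lam\<^sub>0, \<eta>\<^sub>0, \<nu>\<^sub>0)) (q\<^sub>0, \<theta>\<^sub>0) = 0"
    and eq_s: "proj_eta (grad (\<lambda>\<sigma>. Lhat J Dd C b d F (q\<^sub>0, \<theta>\<^sub>0) \<sigma>) (\<alpha>\<^sub>0, lam\<^sub>0, \<eta>\<^sub>0, \<nu>\<^sub>0)) \<eta>\<^sub>0 = 0"
    and traj_z: "\<And>t. 0 \<le> t \<Longrightarrow> (z has_vector_derivative z' t) (at t within {0..})"
    and traj_s: "\<And>t. 0 \<le> t \<Longrightarrow> (s has_vector_derivative s' t) (at t within {0..})"
    and ode_z: "\<And>t. 0 \<le> t \<Longrightarrow> Tz (tq, t\<theta>) (z' t) = - grad (\<lambda>x. Lhat J Dd C b d F x (s t)) (z t)"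
    and ode_s: "\<And>t. 0 \<le> t \<Longrightarrow> Tsig (t\<alpha>, tlam, (t\<eta>\<^sub>1, t\<eta>\<^sub>2), t\<nu>) (s' t)
      = proj_eta (grad (\<lambda>\<sigma>. Lhat J Dd C b d F (z t) \<sigma>) (s t)) (eta_of (s t))"
    and init: "0 \<le> eta_of (s 0)"
    and level: "\<And>t. 0 \<le> t \<Longrightarrow>
      Lhat J Dd C b d F (q\<^sub>0, \<theta>\<^sub>0) (s t) = Lhat J Dd C b d F (q\<^sub>0, \<theta>\<^sub>0) (\<alpha>\<^sub>0, lam\<^sub>0, \<eta>\<^sub>0, \<nu>\<^sub>0)"
begin

abbreviation flow_excess :: "real \<Rightarrow> (real^'e) \<times> (real^'e)" where
  "flow_excess t \<equiv> HT C b (fst (z t) - d) - F"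

lemma legendre_conj_deriv: "(legendre_conj (J j) has_real_derivative inv (deriv (J j)) a) (at a)"
  using legendre_function.has_real_derivative_legendre_conj[OF legendre deriv_differentiable] .

lemma equilibrium:
  shows eq_q: "q\<^sub>0 = gradJinv J \<alpha>\<^sub>0"
    and eq_balance: "(\<Sum>j\<in>UNIV. (q\<^sub>0 - d) $ j) = 0"
    and eq_flow: "HT C b (q\<^sub>0 - d) - F \<le> 0"
    and eq_slack: "\<eta>\<^sub>0 \<bullet> (HT C b (q\<^sub>0 - d) - F) = 0"
    and eq_\<nu>: "q\<^sub>0 - d - (C ** diagm b) *v \<theta>\<^sub>0 = Dd * \<nu>\<^sub>0"
    and eq_\<theta>: "\<nu>\<^sub>0 v* (C ** diagm b) = 0"
proof -
  have "q\<^sub>0 - gradJinv J \<alpha>\<^sub>0 = 0 \<and> (\<Sum>j\<in>UNIV. (q\<^sub>0 - d) $ j) = 0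
      \<and> (projp (fst (HT C b (q\<^sub>0 - d) - F)) (fst \<eta>\<^sub>0) = 0 \<and> projp (snd (HT C b (q\<^sub>0 - d) - F)) (snd \<eta>\<^sub>0) = 0)
      \<and> q\<^sub>0 - d - (C ** diagm b) *v \<theta>\<^sub>0 - Dd * \<nu>\<^sub>0 = 0"
    using eq_s by (simp only: grad_dual_Lhat[OF legendre_conj_deriv] proj_eta_eq zero_prod_def prod.inject
        neg_equal_0_iff_equal simp_thms)
  then show "q\<^sub>0 = gradJinv J \<alpha>\<^sub>0" "(\<Sum>j\<in>UNIV. (q\<^sub>0 - d) $ j) = 0"
    "HT C b (q\<^sub>0 - d) - F \<le> 0" "\<eta>\<^sub>0 \<bullet> (HT C b (q\<^sub>0 - d) - F) = 0"
    "q\<^sub>0 - d - (C ** diagm b) *v \<theta>\<^sub>0 = Dd * \<nu>\<^sub>0"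
    unfolding projp_pair_eq_0_iff[OF eq_eta] by auto
  show "\<nu>\<^sub>0 v* (C ** diagm b) = 0"
    using eq_z by (simp add: grad_primal_Lhat zero_prod_def)
qed

lemma ode_components:
  assumes "0 \<le> t"
  shows "t\<alpha> * fst (s' t) = fst (z t) - gradJinv J (fst (s t))"
    and "tlam * fst (snd (s' t)) = - (\<Sum>j\<in>UNIV. (fst (z t) - d) $ j)"
    and "t\<eta>\<^sub>1 * fst (eta_of (s' t)) = projp (fst (flow_excess t)) (fst (eta_of (s t)))"
    and "t\<eta>\<^sub>2 * snd (eta_of (s' t)) = projp (snd (flow_excess t)) (snd (eta_of (s t)))"
    and "t\<theta> * snd (z' t) = snd (snd (snd (s t))) v* (C ** diagm b)"
proof -
  obtain q \<theta> where z: "z t = (q, \<theta>)"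
    by (cases "z t")
  obtain \<alpha> l \<eta> \<nu> where s: "s t = (\<alpha>, l, \<eta>, \<nu>)"
    by (cases "s t") auto
  show "t\<alpha> * fst (s' t) = fst (z t) - gradJinv J (fst (s t))"
    "tlam * fst (snd (s' t)) = - (\<Sum>j\<in>UNIV. (fst (z t) - d) $ j)"
    "t\<eta>\<^sub>1 * fst (eta_of (s' t)) = projp (fst (flow_excess t)) (fst (eta_of (s t)))"
    "t\<eta>\<^sub>2 * snd (eta_of (s' t)) = projp (snd (flow_excess t)) (snd (eta_of (s t)))"
    using ode_s[OF assms] unfolding z s
    by (simp_all add: Tsig_eq grad_dual_Lhat[OF legendre_conj_deriv] proj_eta_eq eta_of_def)
  show "t\<theta> * snd (z' t) = snd (snd (snd (s t))) v* (C ** diagm b)"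
    using ode_z[OF assms] unfolding s by (simp add: Tz_def grad_primal_Lhat)
qed

lemma eta_nonneg:
  assumes "0 \<le> t"
  shows "0 \<le> eta_of (s t)"
proof -
  have deriv: "((\<lambda>t. eta_of (s t)) has_vector_derivative eta_of (s' t)) (at t within {0..})" if "0 \<le> t" for t
    using bounded_linear.has_vector_derivative[OF bounded_linear_eta_of traj_s[OF that]] .
  have "0 \<le> fst (eta_of (s t))"
  proof (rule projected_flow_nonneg[where u = "\<lambda>t. fst (eta_of (s t))" and u' = "\<lambda>t. fst (eta_of (s' t))"
        and T = "t\<eta>\<^sub>1" and y = "\<lambda>t. fst (flow_excess t)"])
    show "((\<lambda>t. fst (eta_of (s t))) has_vector_derivative fst (eta_of (s' t))) (at t within {0..})"
      if "0 \<le> t" for t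
      using bounded_linear.has_vector_derivative[OF bounded_linear_fst deriv[OF that]] .
  qed (use T_pos(3) ode_components(3) init assms in \<open>simp_all add: less_eq_prod_def\<close>)
  moreover have "0 \<le> snd (eta_of (s t))"
  proof (rule projected_flow_nonneg[where u = "\<lambda>t. snd (eta_of (s t))" and u' = "\<lambda>t. snd (eta_of (s' t))"
        and T = "t\<eta>\<^sub>2" and y = "\<lambda>t. snd (flow_excess t)"])
    show "((\<lambda>t. snd (eta_of (s t))) has_vector_derivative snd (eta_of (s' t))) (at t within {0..})"
      if "0 \<le> t" for t
      using bounded_linear.has_vector_derivative[OF bounded_linear_snd deriv[OF that]] .
  qed (use T_pos(4) ode_components(4) init assms in \<open>simp_all add: less_eq_prod_def\<close>)
  ultimately show ?thesis
    by (simp add: less_eq_prod_def)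
qed

lemma dual_state_at_equilibrium:
  assumes "0 \<le> t"
  shows "fst (s t) = \<alpha>\<^sub>0" "snd (snd (snd (s t))) = \<nu>\<^sub>0" "eta_of (s t) \<bullet> (HT C b (q\<^sub>0 - d) - F) = 0"
proof -
  obtain \<alpha> l \<eta> \<nu> where s: "s t = (\<alpha>, l, \<eta>, \<nu>)"
    by (cases "s t") auto
  have "\<alpha> = \<alpha>\<^sub>0 \<and> \<nu> = \<nu>\<^sub>0 \<and> \<eta> \<bullet> (HT C b (q\<^sub>0 - d) - F) = 0"
    using legendre D_pos equilibrium(1-5) eta_nonneg[OF assms] level[OF assms]
    by (intro Lhat_eq_equilibrium_value_imp) (auto simp: s eta_of_def)
  then show "fst (s t) = \<alpha>\<^sub>0" "snd (snd (snd (s t))) = \<nu>\<^sub>0" "eta_of (s t) \<bullet> (HT C b (q\<^sub>0 - d) - F) = 0"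
    by (simp_all add: s eta_of_def)
qed

lemma primal_state_at_equilibrium:
  assumes "0 \<le> t"
  shows "fst (z t) = q\<^sub>0"
proof -
  have "fst (s' t) = 0"
    using bounded_linear.has_vector_derivative[OF bounded_linear_fst traj_s[OF assms]] assms
    by (rule constant_on_Ici_imp_derivative_0) (rule dual_state_at_equilibrium(1))
  then show ?thesis
    using ode_components(1)[OF assms] dual_state_at_equilibrium(1)[OF assms] eq_q by simp
qed

lemma stationary:
  assumes "0 \<le> t"
  shows "z' t = 0 \<and> s' t = 0"
proof -
  have "fst (z' t) = 0"
    using bounded_linear.has_vector_derivative[OF bounded_linear_fst traj_z[OF assms]] assms
    by (rule constant_on_Ici_imp_derivative_0) (rule primal_state_at_equilibrium)
  moreover have "snd (z' t) = 0"
    using ode_components(5)[OF assms] dual_state_at_equilibrium(2)[OF assms] eq_\<theta> T_pos(1)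
    by (simp add: times_vec_eq_0_iff less_imp_neq[symmetric])
  moreover have "fst (s' t) = 0"
    using bounded_linear.has_vector_derivative[OF bounded_linear_fst traj_s[OF assms]] assms
    by (rule constant_on_Ici_imp_derivative_0) (rule dual_state_at_equilibrium(1))
  moreover have "fst (snd (s' t)) = 0"
    using ode_components(2)[OF assms] primal_state_at_equilibrium[OF assms] eq_balance T_pos(2) by simp
  moreover have "eta_of (s' t) = 0"
  proof -
    have "projp (fst (HT C b (q\<^sub>0 - d) - F)) (fst (eta_of (s t))) = 0
        \<and> projp (snd (HT C b (q\<^sub>0 - d) - F)) (snd (eta_of (s t))) = 0"
      using projp_pair_eq_0_iff[OF eta_nonneg[OF assms]] eq_flow dual_state_at_equilibrium(3)[OF assms]
      by blast
    then have "t\<eta>\<^sub>1 * fst (eta_of (s' t)) = 0" "t\<eta>\<^sub>2 * snd (eta_of (s' t)) = 0"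
      using ode_components(3,4)[OF assms] primal_state_at_equilibrium[OF assms] by simp_all
    then show ?thesis
      using T_pos(3,4) by (simp add: times_vec_eq_0_iff less_imp_neq[symmetric] prod_eq_iff)
  qed
  moreover have "snd (snd (snd (s' t))) = 0"
    using bounded_linear.has_vector_derivative[OF bounded_linear_compose[OF bounded_linear_snd
        bounded_linear_compose[OF bounded_linear_snd bounded_linear_snd]] traj_s[OF assms]] assms
    by (rule constant_on_Ici_imp_derivative_0) (rule dual_state_at_equilibrium(2))
  ultimately show ?thesis
    by (simp add: prod_eq_iff eta_of_def)
qed

end

theorem proposition2:
  fixes src tgt :: "'e::finite \<Rightarrow> 'n::finite"
    and b :: "real^'e" and Dd :: "real^'n" and d :: "real^'n"
    and Fbar Funder :: "real^'e"
    and J :: "'n \<Rightarrow> real \<Rightarrow> real"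
    and tz :: "(real^'n) \<times> (real^'e)"
    and ts :: "(real^'n) \<times> real \<times> ((real^'e) \<times> (real^'e)) \<times> (real^'n)"
    and zs :: "(real^'n) \<times> (real^'e)"
    and ss :: "(real^'n) \<times> real \<times> ((real^'e) \<times> (real^'e)) \<times> (real^'n)"
    and z :: "real \<Rightarrow> (real^'n) \<times> (real^'e)"
    and s :: "real \<Rightarrow> (real^'n) \<times> real \<times> ((real^'e) \<times> (real^'e)) \<times> (real^'n)"
    and z' :: "real \<Rightarrow> (real^'n) \<times> (real^'e)"
    and s' :: "real \<Rightarrow> (real^'n) \<times> real \<times> ((real^'e) \<times> (real^'e)) \<times> (real^'n)"
  defines "LL \<equiv> Lhat J Dd (incidence src tgt) b d (Fbar, - Funder)"
  assumes graph: "connected_digraph src tgt"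
    and b_pos: "\<forall>e. b $ e > 0"
    and D_pos: "\<forall>j. Dd $ j > 0"
    and J_strict_convex: "\<forall>j. strictly_convex_on UNIV (J j)"
    and J_diff: "\<forall>j x. J j differentiable (at x)"
    and J_diff2: "\<forall>j x. deriv (J j) differentiable (at x)"
    and J_bij: "\<forall>j. bij (deriv (J j))"
    and Tz_pos: "Tz_pos tz"
    and Ts_pos: "Tsig_pos ts"
    and eq_eta: "eta_nonneg (eta_of ss)"
    and eq_z: "0 = - grad (\<lambda>x. LL x ss) zs"
    and eq_s: "0 = proj_eta (grad (\<lambda>y. LL zs y) ss) (eta_of ss)"
    and traj_z: "\<forall>t\<ge>0. (z has_vector_derivative z' t) (at t within {0..})"
    and traj_s: "\<forall>t\<ge>0. (s has_vector_derivative s' t) (at t within {0..})"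
    and ode_z: "\<forall>t\<ge>0. Tz tz (z' t) = - grad (\<lambda>x. LL x (s t)) (z t)"
    and ode_s: "\<forall>t\<ge>0. Tsig ts (s' t) = proj_eta (grad (\<lambda>y. LL (z t) y) (s t)) (eta_of (s t))"
    and init: "eta_nonneg (eta_of (s 0))"
    and const1: "\<forall>t\<ge>0. LL zs (s t) = LL zs ss"
    and const2: "\<forall>t\<ge>0. LL (z t) ss = LL zs ss"
  shows "\<forall>t\<ge>0. z' t = 0 \<and> s' t = 0"
proof -
  obtain tq t\<theta> where tz: "tz = (tq, t\<theta>)"
    by (cases tz)
  obtain t\<alpha> tlam t\<eta>\<^sub>1 t\<eta>\<^sub>2 t\<nu> where ts: "ts = (t\<alpha>, tlam, (t\<eta>\<^sub>1, t\<eta>\<^sub>2), t\<nu>)"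
    by (metis prod.collapse)
  obtain q\<^sub>0 \<theta>\<^sub>0 where zs: "zs = (q\<^sub>0, \<theta>\<^sub>0)"
    by (cases zs)
  obtain \<alpha>\<^sub>0 lam\<^sub>0 \<eta>\<^sub>0 \<nu>\<^sub>0 where ss: "ss = (\<alpha>\<^sub>0, lam\<^sub>0, \<eta>\<^sub>0, \<nu>\<^sub>0)"
    by (metis prod.collapse)
  interpret dual_trajectory J Dd d "incidence src tgt" b "(Fbar, - Funder)" tq t\<theta> t\<alpha> tlam t\<eta>\<^sub>1 t\<eta>\<^sub>2 t\<nu>
    q\<^sub>0 \<theta>\<^sub>0 \<alpha>\<^sub>0 lam\<^sub>0 \<eta>\<^sub>0 \<nu>\<^sub>0 z z' s s'
  proof (rule dual_trajectory.intro)
    show "legendre_function (J j)" for j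
      using J_strict_convex J_diff J_bij by unfold_locales auto
  qed (use D_pos Tz_pos Ts_pos eq_eta eq_z eq_s traj_z traj_s ode_z ode_s init const1 J_diff2 in
      \<open>auto simp: LL_def tz ts zs ss eta_of_def eta_nonneg_def less_eq_prod_def less_eq_vec_def
        Tz_pos_def Tsig_pos_def\<close>)
  show ?thesis
    using stationary by blast
qed

end
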